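(* Let $A$ be a finite group and let $G$ be a finite group containing $A$ and an element $c$ of order $n$ with $A\cap\langle c\rangle=\{1_G\}$ and $G=A\langle c\rangle$. For $x\in A$ let $\varphi(x)\in A$ and $\Pi(x)\in\mathbb{Z}_n$ be the unique elements with $cx=\varphi(x)c^{\Pi(x)}$, and let $m$ be the order of $\varphi$ (which is a skew-morphism of $A$ with power function $\pi$). Then: (a) $\langle c^m\rangle$ is a normal subgroup of $G$ and $G/\langle c^m\rangle$ is isomorphic to the skew product $A\langle\varphi\rangle$; (b) the subgroup $A\langle c^m\rangle$ is a semidirect product $A\ltimes\langle c^m\rangle$ in which $x^{-1}c^mx=(c^m)^{\sigma_\Pi(x,m)/m}$ for all $x\in A$; (c) $\mathrm{Av}(x)\equiv1\pmod{n/m}$ for all $x\in A$ if and only if $c^m$ is a central element of $G$.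
   Context: A skew-morphism of a finite group $A$ is a permutation $\varphi$ of $A$ with $\varphi(1_A)=1_A$ for which there is a function $\pi:A\to\mathbb{Z}_m$ ($m$ the order of $\varphi$) with $\varphi(xy)=\varphi(x)\varphi^{\pi(x)}(y)$ for all $x,y\in A$. For $f\in\{\pi,\Pi\}$, $\sigma_f(x,0)=0$ and $\sigma_f(x,k)=\sum_{i=1}^{k}f(\varphi^{i-1}(x))$ for $k>0$. The value $\sigma_\Pi(x,m)\in\mathbb{Z}_n$ is divisible by $m$, and $\mathrm{Av}(x)=\frac1m\sigma_\Pi(x,m)\in\mathbb{Z}_{n/m}$. The skew product $A\langle\varphi\rangle$ is the group on the set of formal products $x\varphi^i$ ($x\in A$, $i\in\mathbb{Z}_m$) with multiplication $x\varphi^i\cdot y\varphi^j=x\varphi^i(y)\varphi^{\sigma_\pi(y,i)+j}$. *)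

theory Defs
  imports "HOL-Algebra.Algebra" "HOL-Algebra.Multiplicative_Group"
begin

text \<open>Given A, c in G with A \<inter> \<langle>c\<rangle> = 1 and G = A\<langle>c\<rangle>, every product c x (x in A)
  is uniquely written as y c^k with y in A and 0 \<le> k < ord c.\<close>
definition skew_dec :: "('a, 'b) monoid_scheme \<Rightarrow> 'a set \<Rightarrow> 'a \<Rightarrow> 'a \<Rightarrow> 'a \<times> nat" where
  "skew_dec G A c x =
     (THE (y, k). y \<in> A \<and> k < group.ord G c \<and> c \<otimes>\<^bsub>G\<^esub> x = y \<otimes>\<^bsub>G\<^esub> (c [^]\<^bsub>G\<^esub> (k::nat)))"

definition skew_phi :: "('a, 'b) monoid_scheme \<Rightarrow> 'a set \<Rightarrow> 'a \<Rightarrow> 'a \<Rightarrow> 'a" where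
  "skew_phi G A c x = fst (skew_dec G A c x)"

text \<open>Pf(x), as representative in {0..<n}\<close>
definition skew_Pi :: "('a, 'b) monoid_scheme \<Rightarrow> 'a set \<Rightarrow> 'a \<Rightarrow> 'a \<Rightarrow> nat" where
  "skew_Pi G A c x = snd (skew_dec G A c x)"

definition perm_order :: "'a set \<Rightarrow> ('a \<Rightarrow> 'a) \<Rightarrow> nat" where
  "perm_order A \<phi> = (LEAST m. 0 < m \<and> (\<forall>x\<in>A. (\<phi> ^^ m) x = x))"

text \<open>sigma_f(x,k) = sum_{i=1}^k f(phi^(i-1)(x)), computed in the naturals
  (reduce modulo the appropriate modulus where used)\<close>
definition skew_sigma :: "('a \<Rightarrow> nat) \<Rightarrow> ('a \<Rightarrow> 'a) \<Rightarrow> 'a \<Rightarrow> nat \<Rightarrow> nat" where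
  "skew_sigma f \<phi> x k = (\<Sum>i\<in>{1..k}. f ((\<phi> ^^ (i - 1)) x))"

text \<open>Av(x) = sigma_Pi(x,m)/m in Z_{n/m}, with sigma_Pi(x,m) taken in Z_n\<close>
definition skew_Av :: "('a \<Rightarrow> nat) \<Rightarrow> ('a \<Rightarrow> 'a) \<Rightarrow> nat \<Rightarrow> nat \<Rightarrow> 'a \<Rightarrow> nat" where
  "skew_Av Pf \<phi> m n x = ((skew_sigma Pf \<phi> x m mod n) div m) mod (n div m)"

definition skew_product ::
  "('a, 'b) monoid_scheme \<Rightarrow> 'a set \<Rightarrow> ('a \<Rightarrow> 'a) \<Rightarrow> ('a \<Rightarrow> nat) \<Rightarrow> nat \<Rightarrow> ('a \<times> nat) monoid" where
  "skew_product G A \<phi> \<pi> m =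
     \<lparr> carrier = A \<times> {0..<m},
       monoid.mult = (\<lambda>(x, i) (y, j). (x \<otimes>\<^bsub>G\<^esub> (\<phi> ^^ i) y, (skew_sigma \<pi> \<phi> y i + j) mod m)),
       one = (\<one>\<^bsub>G\<^esub>, 0) \<rparr>"

end

theory Submission
  imports Defs
begin

text \<open>
  Every element of G is uniquely y c^k with y \<in> A and k < n, and iterating
  c x = \<phi>(x) c^\<Pi>(x) gives c^j x = \<phi>^j(x) c^\<sigma>(x,j), where \<sigma> = \<sigma>_\<Pi>;
  hence (y c^k)(z c^l) = y \<phi>^k(z) c^(\<sigma>(z,k) + l).
  For j = n this forces \<phi>^n = 1 and n | \<sigma>(x,n) = (n/m) \<sigma>(x,m), so m | n and m | \<sigma>(x,m).
  Consequently reducing the exponent of c modulo m turns the multiplication rule of G into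
  that of the skew product, and y c^k \<mapsto> (y, k mod m) is a homomorphism from G onto
  A\<langle>\<phi>\<rangle> with kernel \<langle>c^m\<rangle>. For j = m the rule reads c^m x = x c^\<sigma>(x,m), the
  conjugation formula; so c^m, which commutes with c, is central iff c^\<sigma>(x,m) = c^m
  for all x \<in> A, i.e. iff \<sigma>(x,m)/m \<equiv> 1 modulo the order n/m of c^m.
\<close>

lemma (in group) nat_pow_eq_iff_mod_ord:
  assumes "a \<in> carrier G"
  shows "a [^] (i::nat) = a [^] (j::nat) \<longleftrightarrow> i mod ord a = j mod ord a"
proof -
  have "a [^] i = a [^] j \<longleftrightarrow> a [^] int i = a [^] int j" by (simp add: int_pow_int)
  also have "\<dots> \<longleftrightarrow> int (ord a) dvd int j - int i" using int_pow_eq[OF assms] .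
  also have "\<dots> \<longleftrightarrow> i mod ord a = j mod ord a"
    by (metis mod_eq_dvd_iff of_nat_eq_iff of_nat_mod)
  finally show ?thesis .
qed

lemma (in group) nat_pow_mod_ord:
  "a \<in> carrier G \<Longrightarrow> a [^] (k mod ord a) = a [^] k"
  by (simp add: nat_pow_eq_iff_mod_ord)

lemma (in group) generate_nat_pow_on_finite_carrier:
  assumes "finite (carrier G)" and "a \<in> carrier G"
  shows "generate G {a [^] (d::nat)} = {a [^] (d * k) | k. True}"
  using generate_pow_on_finite_carrier[OF assms(1)] assms(2) by (simp add: nat_pow_pow)

lemma (in group) set_mult_normal_subgroup:
  assumes "subgroup H G" and "N \<lhd> G"
  shows "subgroup (H <#> N) G" and "N \<lhd> G\<lparr>carrier := H <#> N\<rparr>"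
  using commut_normal[OF assms] mult_norm_subgroup[OF assms(2,1)]
    normal_in_normal_set_mult[OF assms(2,1)] by simp_all

lemma funpow_mem: "\<phi> ` A \<subseteq> A \<Longrightarrow> x \<in> A \<Longrightarrow> (\<phi> ^^ j) x \<in> A"
  by (induction j) auto

lemma perm_order_funpow:
  assumes "0 < n" and "\<forall>x\<in>A. (\<phi> ^^ n) x = x"
  shows "0 < perm_order A \<phi>" and "\<forall>x\<in>A. (\<phi> ^^ perm_order A \<phi>) x = x"
  using LeastI[of "\<lambda>m. 0 < m \<and> (\<forall>x\<in>A. (\<phi> ^^ m) x = x)" n] assms
  unfolding perm_order_def by auto

lemma perm_order_dvd:
  assumes "0 < n" and "\<forall>x\<in>A. (\<phi> ^^ n) x = x"
  shows "perm_order A \<phi> dvd n"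
proof (rule ccontr)
  let ?m = "perm_order A \<phi>"
  assume "\<not> ?m dvd n"
  then have "0 < n mod ?m" by (simp add: dvd_eq_mod_eq_0)
  moreover have "\<forall>x\<in>A. (\<phi> ^^ (n mod ?m)) x = x"
    using assms(2) perm_order_funpow[OF assms] by (simp add: funpow_mod_eq)
  ultimately have "?m \<le> n mod ?m" unfolding perm_order_def by (simp add: Least_le)
  moreover have "n mod ?m < ?m" using perm_order_funpow(1)[OF assms] by simp
  ultimately show False by simp
qed

lemma skew_sigma_Suc: "skew_sigma f \<phi> x (Suc k) = skew_sigma f \<phi> x k + f ((\<phi> ^^ k) x)"
  by (simp add: skew_sigma_def)

lemma skew_sigma_add:
  "skew_sigma f \<phi> x (k + l) = skew_sigma f \<phi> x k + skew_sigma f \<phi> ((\<phi> ^^ k) x) l"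
proof (induction l)
  case (Suc l)
  have "(\<phi> ^^ (k + l)) x = (\<phi> ^^ l) ((\<phi> ^^ k) x)" by (metis add.commute comp_apply funpow_add)
  with Suc show ?case by (simp add: skew_sigma_Suc)
qed (simp add: skew_sigma_def)

lemma skew_sigma_mult_period:
  assumes "(\<phi> ^^ d) x = x"
  shows "skew_sigma f \<phi> x (q * d) = q * skew_sigma f \<phi> x d"
  by (induction q) (simp_all add: skew_sigma_add assms skew_sigma_def[of _ _ _ 0])

lemma skew_sigma_mod_fun:
  "skew_sigma (\<lambda>x. f x mod d) \<phi> x k mod d = skew_sigma f \<phi> x k mod d"
  unfolding skew_sigma_def by (rule mod_sum_eq)

lemma skew_sigma_mod_period:
  assumes "\<phi> ` A \<subseteq> A" and "\<forall>y\<in>A. (\<phi> ^^ d) y = y" and "\<forall>y\<in>A. d dvd skew_sigma f \<phi> y d"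
    and "x \<in> A"
  shows "skew_sigma f \<phi> x k mod d = skew_sigma f \<phi> x (k mod d) mod d"
proof -
  let ?y = "(\<phi> ^^ (k mod d)) x"
  have "?y \<in> A" using assms(1,4) by (rule funpow_mem)
  then have "skew_sigma f \<phi> ?y (k div d * d) = (k div d) * skew_sigma f \<phi> ?y d"
    using assms(2) by (simp add: skew_sigma_mult_period)
  then have "skew_sigma f \<phi> x k = skew_sigma f \<phi> x (k mod d) + (k div d) * skew_sigma f \<phi> ?y d"
    using skew_sigma_add[of f \<phi> x "k mod d" "k div d * d"] by simp
  moreover have "d dvd skew_sigma f \<phi> ?y d" using \<open>?y \<in> A\<close> assms(3) by blast
  ultimately show ?thesis by (auto simp: mult.left_commute)
qed

locale cyclic_complement = group G for G (structure) +
  fixes A :: "'a set" and c :: 'a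
  assumes finite_carrier: "finite (carrier G)" and subgroup_A: "subgroup A G"
    and c_carrier: "c \<in> carrier G"
    and A_Int_cyclic: "A \<inter> generate G {c} = {\<one>}"
    and A_cyclic_product: "A <#> generate G {c} = carrier G"
begin

lemma A_carrier [simp]: "x \<in> A \<Longrightarrow> x \<in> carrier G"
  by (rule subgroup.mem_carrier[OF subgroup_A])

lemma ord_c_pos: "0 < ord c"
  using ord_ge_1[OF finite_carrier c_carrier] by simp

lemma generate_c: "generate G {c} = {c [^] (k::nat) | k. True}"
  using generate_nat_pow_on_finite_carrier[OF finite_carrier c_carrier, of 1] c_carrier by simp

lemma factorization_exists:
  assumes "g \<in> carrier G"
  obtains y k where "y \<in> A" and "g = y \<otimes> c [^] (k::nat)"
proof -
  from assms obtain y h where "y \<in> A" "h \<in> generate G {c}" "g = y \<otimes> h"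
    unfolding A_cyclic_product[symmetric] set_mult_def by blast
  moreover from \<open>h \<in> generate G {c}\<close> obtain k :: nat where "h = c [^] k"
    using generate_c by blast
  ultimately show thesis using that by blast
qed

lemma factorization_unique:
  assumes "y \<in> A" and "y' \<in> A" and eq: "y \<otimes> c [^] (k::nat) = y' \<otimes> c [^] (k'::nat)"
  shows "y = y'" and "k mod ord c = k' mod ord c"
proof -
  have "inv y' \<otimes> y \<otimes> c [^] k = c [^] k'"
    using eq assms(1,2) c_carrier by (simp add: m_assoc flip: m_assoc[of "inv y'"])
  then have "inv y' \<otimes> y = c [^] k' \<otimes> inv (c [^] k)"
    using assms(1,2) c_carrier by (simp add: inv_solve_right)
  moreover have "inv y' \<otimes> y \<in> A"
    using assms(1,2) by (simp add: subgroup.m_closed subgroup.m_inv_closed subgroup_A)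
  moreover have "c [^] k \<in> generate G {c}" "c [^] k' \<in> generate G {c}"
    using generate_c by auto
  then have "c [^] k' \<otimes> inv (c [^] k) \<in> generate G {c}"
    using generate_is_subgroup c_carrier by (simp add: subgroup.m_closed subgroup.m_inv_closed)
  ultimately have "inv y' \<otimes> y = \<one>" using A_Int_cyclic by auto
  then show "y = y'" using assms(1,2) inv_solve_left'[of "\<one>" y' y] by simp
  with eq have "c [^] k = c [^] k'" using assms(2) c_carrier by simp
  then show "k mod ord c = k' mod ord c" using nat_pow_eq_iff_mod_ord[OF c_carrier] by simp
qed

definition decomp :: "'a \<Rightarrow> 'a \<times> nat" where
  "decomp g = (THE (y, k). y \<in> A \<and> k < ord c \<and> g = y \<otimes> c [^] (k::nat))"

lemma decomp_eq:
  assumes "y \<in> A"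
  shows "decomp (y \<otimes> c [^] (k::nat)) = (y, k mod ord c)"
  unfolding decomp_def
proof (rule the_equality)
  show "case (y, k mod ord c) of (y', k') \<Rightarrow>
          y' \<in> A \<and> k' < ord c \<and> y \<otimes> c [^] k = y' \<otimes> c [^] k'"
    using assms ord_c_pos nat_pow_mod_ord[OF c_carrier] by simp
next
  fix p assume "case p of (y', k') \<Rightarrow> y' \<in> A \<and> k' < ord c \<and> y \<otimes> c [^] k = y' \<otimes> c [^] k'"
  then show "p = (y, k mod ord c)"
    using factorization_unique[OF assms] by (cases p) (simp, metis mod_less)
qed

lemma decomp_spec:
  assumes "g \<in> carrier G"
  shows "fst (decomp g) \<in> A" and "snd (decomp g) < ord c"
    and "g = fst (decomp g) \<otimes> c [^] snd (decomp g)"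
proof -
  obtain y k where "y \<in> A" and g: "g = y \<otimes> c [^] (k::nat)"
    using factorization_exists[OF assms] .
  then show "fst (decomp g) \<in> A" and "snd (decomp g) < ord c"
    and "g = fst (decomp g) \<otimes> c [^] snd (decomp g)"
    using decomp_eq ord_c_pos nat_pow_mod_ord[OF c_carrier] by simp_all
qed

abbreviation "\<phi> \<equiv> skew_phi G A c"
abbreviation "Pf \<equiv> skew_Pi G A c"
abbreviation "\<sigma> \<equiv> skew_sigma Pf \<phi>"
abbreviation "m \<equiv> perm_order A \<phi>"

lemma skew_phi_Pi_decomp: "\<phi> x = fst (decomp (c \<otimes> x))" "Pf x = snd (decomp (c \<otimes> x))"
  by (simp_all add: skew_phi_def skew_Pi_def skew_dec_def decomp_def)

lemma skew_phi_closed: "\<phi> ` A \<subseteq> A"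
  using decomp_spec(1) c_carrier by (auto simp: skew_phi_Pi_decomp)

lemma c_mult_eq: "x \<in> A \<Longrightarrow> c \<otimes> x = \<phi> x \<otimes> c [^] Pf x"
  using decomp_spec(3) c_carrier by (simp add: skew_phi_Pi_decomp)

lemma funpow_phi_closed: "x \<in> A \<Longrightarrow> (\<phi> ^^ j) x \<in> A"
  using skew_phi_closed by (rule funpow_mem)

lemma c_pow_mult_eq:
  assumes "x \<in> A"
  shows "c [^] (j::nat) \<otimes> x = (\<phi> ^^ j) x \<otimes> c [^] \<sigma> x j"
proof (induction j)
  case 0
  then show ?case using assms by (simp add: skew_sigma_def)
next
  case (Suc j)
  let ?z = "(\<phi> ^^ j) x"
  have z: "?z \<in> A" "\<phi> ?z \<in> A" using assms funpow_phi_closed skew_phi_closed by auto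
  have "c [^] Suc j \<otimes> x = c \<otimes> (c [^] j \<otimes> x)"
    unfolding nat_pow_Suc2[OF c_carrier] using assms c_carrier by (simp add: m_assoc)
  also have "\<dots> = (c \<otimes> ?z) \<otimes> c [^] \<sigma> x j"
    using Suc.IH z c_carrier by (simp add: m_assoc)
  also have "\<dots> = \<phi> ?z \<otimes> (c [^] Pf ?z \<otimes> c [^] \<sigma> x j)"
    using c_mult_eq[OF z(1)] z c_carrier by (simp add: m_assoc)
  also have "\<dots> = (\<phi> ^^ Suc j) x \<otimes> c [^] \<sigma> x (Suc j)"
    using c_carrier by (simp add: nat_pow_mult skew_sigma_Suc add.commute)
  finally show ?case .
qed

lemma funpow_phi_ord_c:
  assumes "x \<in> A"
  shows "(\<phi> ^^ ord c) x = x" and "ord c dvd \<sigma> x (ord c)"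
proof -
  have "(\<phi> ^^ ord c) x \<otimes> c [^] \<sigma> x (ord c) = x \<otimes> c [^] (0::nat)"
    using c_pow_mult_eq[OF assms, of "ord c"] assms c_carrier by simp
  from factorization_unique[OF funpow_phi_closed[OF assms] assms this]
  show "(\<phi> ^^ ord c) x = x" and "ord c dvd \<sigma> x (ord c)"
    by (simp_all add: dvd_eq_mod_eq_0)
qed

lemma m_pos: "0 < m"
  by (rule perm_order_funpow(1)[OF ord_c_pos]) (simp add: funpow_phi_ord_c(1))

lemma funpow_phi_m: "x \<in> A \<Longrightarrow> (\<phi> ^^ m) x = x"
  using perm_order_funpow(2)[OF ord_c_pos, of A \<phi>] funpow_phi_ord_c(1) by simp

lemma m_dvd_ord_c: "m dvd ord c"
  by (rule perm_order_dvd[OF ord_c_pos]) (simp add: funpow_phi_ord_c(1))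

lemma m_dvd_sigma:
  assumes "x \<in> A"
  shows "m dvd \<sigma> x m"
proof -
  obtain q where q: "ord c = q * m" using m_dvd_ord_c by (metis dvd_def mult.commute)
  then have "q * m dvd q * \<sigma> x m"
    using funpow_phi_ord_c(2)[OF assms] skew_sigma_mult_period[OF funpow_phi_m[OF assms]] by simp
  moreover have "0 < q" using q ord_c_pos by simp
  ultimately show ?thesis by simp
qed

lemma c_pow_m_mult_eq: "x \<in> A \<Longrightarrow> c [^] m \<otimes> x = x \<otimes> c [^] \<sigma> x m"
  using c_pow_mult_eq funpow_phi_m by simp

abbreviation "skew_prod \<equiv> skew_product G A \<phi> (\<lambda>x. Pf x mod m) m"

definition to_skew_product :: "'a \<Rightarrow> 'a \<times> nat" where
  "to_skew_product g = (fst (decomp g), snd (decomp g) mod m)"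

lemma to_skew_product_eq: "y \<in> A \<Longrightarrow> to_skew_product (y \<otimes> c [^] k) = (y, k mod m)"
  by (simp add: to_skew_product_def decomp_eq mod_mod_cancel[OF m_dvd_ord_c])

lemma normal_form_mult:
  assumes "y \<in> A" and "z \<in> A"
  shows "(y \<otimes> c [^] k) \<otimes> (z \<otimes> c [^] l) = (y \<otimes> (\<phi> ^^ k) z) \<otimes> c [^] (\<sigma> z k + l)"
proof -
  have "(\<phi> ^^ k) z \<in> A" using assms(2) by (rule funpow_phi_closed)
  then have "(y \<otimes> c [^] k) \<otimes> (z \<otimes> c [^] l) = y \<otimes> ((c [^] k \<otimes> z) \<otimes> c [^] l)"
    using assms c_carrier by (simp add: m_assoc)
  also have "\<dots> = (y \<otimes> (\<phi> ^^ k) z) \<otimes> c [^] (\<sigma> z k + l)"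
    using c_pow_mult_eq[OF assms(2)] \<open>(\<phi> ^^ k) z \<in> A\<close> assms c_carrier
    by (simp add: m_assoc nat_pow_mult)
  finally show ?thesis .
qed

lemma skew_sigma_Pf_mod_m:
  assumes "y \<in> A"
  shows "(skew_sigma (\<lambda>x. Pf x mod m) \<phi> y (k mod m) + l mod m) mod m = (\<sigma> y k + l) mod m"
proof -
  have "(skew_sigma (\<lambda>x. Pf x mod m) \<phi> y (k mod m) + l mod m) mod m
      = (skew_sigma (\<lambda>x. Pf x mod m) \<phi> y (k mod m) mod m + l) mod m"
    by (simp only: mod_add_right_eq mod_add_left_eq)
  also have "\<dots> = (\<sigma> y (k mod m) mod m + l) mod m" by (simp only: skew_sigma_mod_fun)
  also have "\<sigma> y (k mod m) mod m = \<sigma> y k mod m"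
    using skew_sigma_mod_period[OF skew_phi_closed _ _ assms, of m Pf k] funpow_phi_m m_dvd_sigma
    by simp
  finally show ?thesis by (simp add: mod_add_left_eq)
qed

lemma to_skew_product_mult:
  assumes "g \<in> carrier G" and "h \<in> carrier G"
  shows "to_skew_product (g \<otimes> h) = to_skew_product g \<otimes>\<^bsub>skew_prod\<^esub> to_skew_product h"
proof -
  obtain y k where y: "y \<in> A" and g: "g = y \<otimes> c [^] (k::nat)"
    using factorization_exists[OF assms(1)] .
  obtain z l where z: "z \<in> A" and h: "h = z \<otimes> c [^] (l::nat)"
    using factorization_exists[OF assms(2)] .
  have "y \<otimes> (\<phi> ^^ k) z \<in> A"
    using y funpow_phi_closed[OF z] subgroup_A by (simp add: subgroup.m_closed)
  then have "to_skew_product (g \<otimes> h) = (y \<otimes> (\<phi> ^^ k) z, (\<sigma> z k + l) mod m)"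
    unfolding g h normal_form_mult[OF y z] by (rule to_skew_product_eq)
  also have "\<dots> = (y, k mod m) \<otimes>\<^bsub>skew_prod\<^esub> (z, l mod m)"
    using funpow_mod_eq[OF funpow_phi_m[OF z]]
    by (simp add: skew_product_def skew_sigma_Pf_mod_m[OF z])
  finally show ?thesis unfolding g h to_skew_product_eq[OF y] to_skew_product_eq[OF z] .
qed

lemma to_skew_product_image: "to_skew_product ` carrier G = carrier skew_prod"
proof
  show "to_skew_product ` carrier G \<subseteq> carrier skew_prod"
    using decomp_spec(1) m_pos by (auto simp: to_skew_product_def skew_product_def)
next
  show "carrier skew_prod \<subseteq> to_skew_product ` carrier G"
  proof
    fix p assume "p \<in> carrier skew_prod"
    then obtain y i where p: "p = (y, i)" "y \<in> A" "i < m" by (auto simp: skew_product_def)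
    then have "to_skew_product (y \<otimes> c [^] i) = p" by (simp add: to_skew_product_eq)
    moreover have "y \<otimes> c [^] i \<in> carrier G" using p c_carrier by simp
    ultimately show "p \<in> to_skew_product ` carrier G" by (metis image_eqI)
  qed
qed

lemma to_skew_product_hom: "to_skew_product \<in> hom G skew_prod"
  using to_skew_product_image to_skew_product_mult by (intro homI) auto

lemma group_skew_product: "group skew_prod"
proof -
  have "to_skew_product \<one> = (\<one>, 0)"
    using to_skew_product_eq[of \<one> 0] subgroup.one_closed[OF subgroup_A] by simp
  then have "skew_prod\<lparr>carrier := to_skew_product ` carrier G, one := to_skew_product \<one>\<rparr> = skew_prod"
    unfolding to_skew_product_image by (simp add: skew_product_def)
  with hom_imp_img_group[OF to_skew_product_hom] show ?thesis by simp
qed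

lemma group_hom_to_skew_product: "group_hom G skew_prod to_skew_product"
  by (simp add: group_hom_def group_hom_axioms_def group_skew_product to_skew_product_hom is_group)

lemma generate_c_pow_m: "generate G {c [^] m} = {c [^] (m * k) | k. True}"
  by (rule generate_nat_pow_on_finite_carrier[OF finite_carrier c_carrier])

lemma kernel_to_skew_product: "kernel G skew_prod to_skew_product = generate G {c [^] m}"
proof -
  have "g \<in> kernel G skew_prod to_skew_product \<longleftrightarrow> g \<in> generate G {c [^] m}"
    if g_carrier: "g \<in> carrier G" for g
  proof -
    obtain y k where y: "y \<in> A" and g: "g = y \<otimes> c [^] (k::nat)"
      using factorization_exists[OF g_carrier] .
    have "g \<in> kernel G skew_prod to_skew_product \<longleftrightarrow> y = \<one> \<and> m dvd k"
      using g_carrier y by (simp add: kernel_def g to_skew_product_eq skew_product_def dvd_eq_mod_eq_0)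
    also have "\<dots> \<longleftrightarrow> g \<in> generate G {c [^] m}"
      unfolding generate_c_pow_m g
    proof
      assume "y = \<one> \<and> m dvd k"
      then show "y \<otimes> c [^] k \<in> {c [^] (m * k) | k. True}" using c_carrier by auto
    next
      assume "y \<otimes> c [^] k \<in> {c [^] (m * k) | k. True}"
      then obtain t where "y \<otimes> c [^] k = \<one> \<otimes> c [^] (m * t)" using c_carrier by auto
      from factorization_unique[OF y subgroup.one_closed[OF subgroup_A] this]
      show "y = \<one> \<and> m dvd k" using m_dvd_ord_c by (metis dvd_mod_iff dvd_triv_left)
    qed
    finally show ?thesis .
  qed
  moreover have "generate G {c [^] m} \<subseteq> carrier G"
    using generate_incl c_carrier by simp
  ultimately show ?thesis unfolding kernel_def by blast
qed

lemma normal_generate_c_pow_m: "generate G {c [^] m} \<lhd> G"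
  using group_hom.normal_kernel[OF group_hom_to_skew_product] kernel_to_skew_product by simp

lemma quotient_iso_skew_product: "G Mod generate G {c [^] m} \<cong> skew_prod"
  using group_hom.FactGroup_iso[OF group_hom_to_skew_product to_skew_product_image]
  by (simp add: kernel_to_skew_product)

lemma A_Int_generate_c_pow_m: "A \<inter> generate G {c [^] m} = {\<one>}"
proof -
  have "generate G {c [^] m} \<subseteq> generate G {c}"
    unfolding generate_c_pow_m generate_c by blast
  moreover have "\<one> \<in> generate G {c [^] m}"
    using generate.one by blast
  ultimately show ?thesis using A_Int_cyclic subgroup.one_closed[OF subgroup_A] by blast
qed

lemma inv_conj_c_pow_m:
  assumes "x \<in> A"
  shows "inv x \<otimes> c [^] m \<otimes> x = (c [^] m) [^] ((\<sigma> x m mod ord c) div m)"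
proof -
  have "m dvd \<sigma> x m mod ord c"
    using m_dvd_sigma[OF assms] m_dvd_ord_c by (simp add: dvd_mod)
  then have "m * ((\<sigma> x m mod ord c) div m) = \<sigma> x m mod ord c" by simp
  moreover have "inv x \<otimes> c [^] m \<otimes> x = c [^] \<sigma> x m"
    using c_pow_m_mult_eq[OF assms] assms c_carrier by (simp add: m_assoc inv_solve_left')
  ultimately show ?thesis
    using c_carrier by (simp add: nat_pow_pow nat_pow_mod_ord)
qed

lemma skew_Av_eq_1_iff_commute:
  assumes "x \<in> A"
  shows "skew_Av Pf \<phi> m (ord c) x = 1 mod (ord c div m) \<longleftrightarrow> c [^] m \<otimes> x = x \<otimes> c [^] m"
proof -
  let ?t = "(\<sigma> x m mod ord c) div m"
  have cm: "c [^] m \<in> carrier G" using c_carrier by simp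
  have "skew_Av Pf \<phi> m (ord c) x = 1 mod (ord c div m) \<longleftrightarrow> ?t mod ord (c [^] m) = 1 mod ord (c [^] m)"
    using ord_pow[OF c_carrier m_dvd_ord_c] m_pos by (simp add: skew_Av_def)
  also have "\<dots> \<longleftrightarrow> (c [^] m) [^] ?t = (c [^] m) [^] (1::nat)"
    by (rule nat_pow_eq_iff_mod_ord[OF cm, symmetric])
  also have "\<dots> \<longleftrightarrow> inv x \<otimes> c [^] m \<otimes> x = c [^] m"
    using cm by (simp add: inv_conj_c_pow_m[OF assms])
  also have "\<dots> \<longleftrightarrow> c [^] m \<otimes> x = x \<otimes> c [^] m"
    using assms cm by (simp add: m_assoc inv_solve_left')
  finally show ?thesis .
qed

lemma central_c_pow_iff_commute_A:
  "(\<forall>g\<in>carrier G. c [^] (j::nat) \<otimes> g = g \<otimes> c [^] j) \<longleftrightarrow> (\<forall>x\<in>A. c [^] j \<otimes> x = x \<otimes> c [^] j)"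
proof (intro iffI ballI)
  fix g assume A_comm: "\<forall>x\<in>A. c [^] j \<otimes> x = x \<otimes> c [^] j" and "g \<in> carrier G"
  then obtain y k where y: "y \<in> A" and g: "g = y \<otimes> c [^] (k::nat)"
    using factorization_exists by blast
  have "c [^] j \<otimes> g = (c [^] j \<otimes> y) \<otimes> c [^] k" using g y c_carrier by (simp add: m_assoc)
  also have "\<dots> = y \<otimes> (c [^] k \<otimes> c [^] j)"
    using A_comm y c_carrier by (simp add: m_assoc nat_pow_comm)
  also have "\<dots> = g \<otimes> c [^] j" using g y c_carrier by (simp add: m_assoc)
  finally show "c [^] j \<otimes> g = g \<otimes> c [^] j" .
qed simp

end

theorem proposition4p1:
  fixes G :: "('a, 'b) monoid_scheme" and A :: "'a set" and c :: 'a
    and n m :: nat and \<phi> :: "'a \<Rightarrow> 'a" and Pf \<pi> :: "'a \<Rightarrow> nat"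
  assumes "group G" and "finite (carrier G)"
    and "subgroup A G"
    and "c \<in> carrier G" and "n = group.ord G c"
    and "A \<inter> generate G {c} = {\<one>\<^bsub>G\<^esub>}"
    and "A <#>\<^bsub>G\<^esub> generate G {c} = carrier G"
    and "\<phi> = skew_phi G A c" and "Pf = skew_Pi G A c"
    and "m = perm_order A \<phi>"
    and "\<pi> = (\<lambda>x. Pf x mod m)"
  shows "(generate G {c [^]\<^bsub>G\<^esub> m} \<lhd> G
         \<and> G Mod (generate G {c [^]\<^bsub>G\<^esub> m}) \<cong> skew_product G A \<phi> \<pi> m)
         \<and> (subgroup (A <#>\<^bsub>G\<^esub> generate G {c [^]\<^bsub>G\<^esub> m}) G
         \<and> generate G {c [^]\<^bsub>G\<^esub> m} \<lhd> G\<lparr>carrier := A <#>\<^bsub>G\<^esub> generate G {c [^]\<^bsub>G\<^esub> m}\<rparr>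
         \<and> A \<inter> generate G {c [^]\<^bsub>G\<^esub> m} = {\<one>\<^bsub>G\<^esub>}
         \<and> (\<forall>x\<in>A. inv\<^bsub>G\<^esub> x \<otimes>\<^bsub>G\<^esub> (c [^]\<^bsub>G\<^esub> m) \<otimes>\<^bsub>G\<^esub> x
                  = (c [^]\<^bsub>G\<^esub> m) [^]\<^bsub>G\<^esub> ((skew_sigma Pf \<phi> x m mod n) div m)))
         \<and> ((\<forall>x\<in>A. skew_Av Pf \<phi> m n x = 1 mod (n div m))
         \<longleftrightarrow> (\<forall>g\<in>carrier G. (c [^]\<^bsub>G\<^esub> m) \<otimes>\<^bsub>G\<^esub> g = g \<otimes>\<^bsub>G\<^esub> (c [^]\<^bsub>G\<^esub> m)))"
proof -
  interpret cyclic_complement G A c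
    using assms(1-4,6,7) by (simp add: cyclic_complement_def cyclic_complement_axioms_def)
  show ?thesis
    unfolding assms(5,8-11)
    using normal_generate_c_pow_m quotient_iso_skew_product
      set_mult_normal_subgroup[OF subgroup_A normal_generate_c_pow_m]
      A_Int_generate_c_pow_m inv_conj_c_pow_m skew_Av_eq_1_iff_commute
      central_c_pow_iff_commute_A
    by simp
qed

end
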